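(* Assume $p\neq 0.5$ and $e_{-1}+e_{+1}<1$. Let $\mathcal F$ be a class of measurable classifiers $f:\mathcal X\to\{-1,+1\}$ such that $\min_{f\in\mathcal F}R_{\mathcal D}(f)$ is attained, and let $\tilde f^*\in\arg\min_{f\in\mathcal F}\mathbb E_{\tilde{\mathcal D}}[\mathbb 1_{\mathrm{peer}}(f(X),\tilde Y)]$. Then $$\bigl|R_{\mathcal D}(\tilde f^* )-\min_{f\in\mathcal F}R_{\mathcal D}(f)\bigr|\le|\delta_p|,\qquad \delta_p:=\mathbb P(Y=+1)-\mathbb P(Y=-1),$$ where $R_{\mathcal D}(f)=\mathbb P_{(X,Y)\sim\mathcal D}(f(X)\neq Y)$.
   Context: Let $\mathcal X\subseteq\mathbb R^d$ and let $(X,Y)$ be a random pair with distribution $\mathcal D$ on $\mathcal X\times\{-1,+1\}$, with $p:=\mathbb P(Y=+1)\in(0,1)$. A noisy label $\tilde Y\in\{-1,+1\}$ is generated with noise rates $e_{+1}:=\mathbb P(\tilde Y=-1\mid Y=+1)$, $e_{-1}:=\mathbb P(\tilde Y=+1\mid Y=-1)$, where $\tilde Y$ is conditionally independent of $X$ given $Y$; $\tilde{\mathcal D}$ is the distribution of $(X,\tilde Y)$. The 0-1 loss is $\mathbb 1(a,b)=1$ if $a\neq b$ and $0$ otherwise. The expected 0-1 peer loss of $f$ on $\tilde{\mathcal D}$ is $$\mathbb E_{\tilde{\mathcal D}}[\mathbb 1_{\mathrm{peer}}(f(X),\tilde Y)]:=\mathbb E[\mathbb 1(f(X),\tilde Y)]-\mathbb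 E[\mathbb 1(f(X_1),\tilde Y_2)],$$ where $(X,\tilde Y),(X_1,\tilde Y_1),(X_2,\tilde Y_2)$ are i.i.d. draws from $\tilde{\mathcal D}$. *)

theory Defs
  imports "HOL-Probability.Probability"
begin

text \<open>0-1 loss on labels in {-1,+1} (represented as integers).\<close>
definition zero_one :: "int \<Rightarrow> int \<Rightarrow> real" where
  "zero_one a b = (if a \<noteq> b then 1 else 0)"

definition joint_distr :: "'w measure \<Rightarrow> ('w \<Rightarrow> 'a::euclidean_space) \<Rightarrow> ('w \<Rightarrow> int)
    \<Rightarrow> ('a \<times> int) measure" where
  "joint_distr M X L = distr M (borel \<Otimes>\<^sub>M count_space UNIV) (\<lambda>\<omega>. (X \<omega>, L \<omega>))"

definition risk :: "('a \<times> int) measure \<Rightarrow> ('a \<Rightarrow> int) \<Rightarrow> real" where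
  "risk D f = measure D {z \<in> space D. f (fst z) \<noteq> snd z}"

definition peer_risk :: "('a \<times> int) measure \<Rightarrow> ('a \<Rightarrow> int) \<Rightarrow> real" where
  "peer_risk Dt f =
     (\<integral>z. zero_one (f (fst z)) (snd z) \<partial>Dt)
     - (\<integral>zz. zero_one (f (fst (fst zz))) (snd (snd zz)) \<partial>(Dt \<Otimes>\<^sub>M Dt))"

end

theory Submission
  imports Defs
begin

text \<open>
  For labels in \<open>{-1, 1}\<close> the 0-1 loss is \<open>(1 - a b) / 2\<close>, so the peer loss of \<open>f\<close> is
  \<open>-Cov(f(X), label) / 2\<close>. Noise that is conditionally independent of \<open>X\<close> given \<open>Y\<close> satisfies
  \<open>E[Yt | X, Y] = (e_neg - e_pos) + (1 - e_pos - e_neg) Y\<close>, hence the noisy peer loss is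
  \<open>1 - e_pos - e_neg > 0\<close> times the clean one and \<open>fstar\<close> also minimises the clean peer loss.
  The clean peer loss equals \<open>R(f) - P(Y = 1) + P(f(X) = 1) \<delta>\<^sub>p\<close>, so the risks of \<open>fstar\<close> and
  of a risk minimiser \<open>g\<close> differ by at most \<open>|P(fstar(X) = 1) - P(g(X) = 1)| |\<delta>\<^sub>p| \<le> |\<delta>\<^sub>p|\<close>. The covariance identity is verified by
  expanding every probability over the eight atoms \<open>{f(X) = s, Y = y, Yt = t}\<close>.
\<close>

lemma (in finite_measure) measure_eq_sum_values:
  assumes "finite V" and "\<forall>\<omega>\<in>space M. Z \<omega> \<in> V"
    and "\<And>v. {\<omega>\<in>space M. Z \<omega> = v} \<in> sets M"
  shows "measure M {\<omega>\<in>space M. P (Z \<omega>)}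
    = (\<Sum>v\<in>V. if P v then measure M {\<omega>\<in>space M. Z \<omega> = v} else 0)"
proof -
  have "{\<omega>\<in>space M. P (Z \<omega>)} = (\<Union>v\<in>{v\<in>V. P v}. {\<omega>\<in>space M. Z \<omega> = v})"
    using assms(2) by auto
  then have "measure M {\<omega>\<in>space M. P (Z \<omega>)}
      = (\<Sum>v\<in>{v\<in>V. P v}. measure M {\<omega>\<in>space M. Z \<omega> = v})"
    using assms(1,3) by (auto intro!: finite_measure_finite_Union simp: disjoint_family_on_def)
  then show ?thesis
    by (simp add: sum.inter_filter[OF assms(1)])
qed

lemma (in finite_measure) measure_eq_sum_sign_atoms:
  fixes A B C :: "'a \<Rightarrow> int"
  assumes vals: "\<forall>\<omega>\<in>space M. A \<omega> \<in> {-1, 1} \<and> B \<omega> \<in> {-1, 1} \<and> C \<omega> \<in> {-1, 1}"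
    and atoms: "\<And>a b c. {\<omega>\<in>space M. A \<omega> = a \<and> B \<omega> = b \<and> C \<omega> = c} \<in> sets M"
  shows "measure M {\<omega>\<in>space M. Q (A \<omega>) (B \<omega>) (C \<omega>)}
    = (\<Sum>a\<in>{-1,1}. \<Sum>b\<in>{-1,1}. \<Sum>c\<in>{-1,1}.
        if Q a b c then measure M {\<omega>\<in>space M. A \<omega> = a \<and> B \<omega> = b \<and> C \<omega> = c} else 0)"
proof -
  let ?Z = "\<lambda>\<omega>. (A \<omega>, B \<omega>, C \<omega>)" and ?V = "{-1,1} \<times> {-1,1} \<times> {-1,1::int}"
  have "{\<omega>\<in>space M. ?Z \<omega> = v} \<in> sets M" for v
    using atoms[of "fst v" "fst (snd v)" "snd (snd v)"] by (cases v) simp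
  moreover have "\<forall>\<omega>\<in>space M. ?Z \<omega> \<in> ?V"
    using vals by blast
  ultimately have "measure M {\<omega>\<in>space M. (\<lambda>(a, b, c). Q a b c) (?Z \<omega>)}
      = (\<Sum>v\<in>?V. if (\<lambda>(a, b, c). Q a b c) v then measure M {\<omega>\<in>space M. ?Z \<omega> = v} else 0)"
    by (intro measure_eq_sum_values) auto
  then show ?thesis
    by (simp add: insert_Times_insert)
qed

lemma peer_risk_eq_risk_minus:
  fixes D :: "('a \<times> int) measure" and f :: "'a \<Rightarrow> int"
  assumes "prob_space D"
    and f_meas: "(\<lambda>z. f (fst z)) \<in> measurable D (count_space UNIV)"
    and snd_meas: "snd \<in> measurable D (count_space UNIV)"
    and f_vals: "\<forall>x. f x \<in> {-1, 1}"
  shows "peer_risk D f = risk D f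
    - (measure D {z\<in>space D. f (fst z) = 1} * measure D {z\<in>space D. snd z \<noteq> 1}
       + measure D {z\<in>space D. f (fst z) = -1} * measure D {z\<in>space D. snd z \<noteq> -1})"
proof -
  interpret D: prob_space D by fact
  interpret DD: prob_space "D \<Otimes>\<^sub>M D"
    by (intro prob_space_pair D.prob_space_axioms)
  define S where "S c = {z\<in>space D. f (fst z) = c}" for c
  define T where "T c = {z\<in>space D. snd z \<noteq> c}" for c
  have events: "S c \<in> sets D" "T c \<in> sets D" for c
    unfolding S_def T_def using f_meas snd_meas by measurable
  have "(\<integral>z. zero_one (f (fst z)) (snd z) \<partial>D)
      = (\<integral>z. indicator {z\<in>space D. f (fst z) \<noteq> snd z} z \<partial>D)"
    by (intro Bochner_Integration.integral_cong) (auto simp: zero_one_def)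
  also have "\<dots> = risk D f"
    by (simp add: risk_def Int_absorb2)
  finally have risk_term: "(\<integral>z. zero_one (f (fst z)) (snd z) \<partial>D) = risk D f" .
  have "(\<integral>zz. zero_one (f (fst (fst zz))) (snd (snd zz)) \<partial>(D \<Otimes>\<^sub>M D))
      = (\<integral>zz. indicator (S 1 \<times> T 1) zz + indicator (S (-1) \<times> T (-1)) zz \<partial>(D \<Otimes>\<^sub>M D))"
    using f_vals
    by (intro Bochner_Integration.integral_cong)
       (auto simp: space_pair_measure zero_one_def indicator_def S_def T_def)
  also have "\<dots> = measure (D \<Otimes>\<^sub>M D) (S 1 \<times> T 1) + measure (D \<Otimes>\<^sub>M D) (S (-1) \<times> T (-1))"
    using events
    by (simp add: Int_absorb2 sets.sets_into_space less_top[symmetric])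
  also have "\<dots> = measure D (S 1) * measure D (T 1) + measure D (S (-1)) * measure D (T (-1))"
    using events by (simp add: D.emeasure_pair_measure_Times measure_def enn2real_mult)
  finally show ?thesis
    unfolding peer_risk_def risk_term S_def T_def by simp
qed

lemma
  fixes X :: "'w \<Rightarrow> 'a::euclidean_space" and L :: "'w \<Rightarrow> int"
  shows space_joint_distr: "space (joint_distr M X L) = UNIV"
    and sets_joint_distr: "sets (joint_distr M X L) = sets (borel \<Otimes>\<^sub>M count_space UNIV)"
  by (simp_all add: joint_distr_def space_pair_measure)

lemma measure_joint_distr:
  fixes X :: "'w \<Rightarrow> 'a::euclidean_space" and L :: "'w \<Rightarrow> int"
  assumes [measurable]: "X \<in> measurable M borel" "L \<in> measurable M (count_space UNIV)"
    "Measurable.pred (borel \<Otimes>\<^sub>M count_space UNIV) P"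
  shows "measure (joint_distr M X L) {z. P z} = measure M {\<omega>\<in>space M. P (X \<omega>, L \<omega>)}"
proof -
  have "{z. P z} = {z \<in> space (borel \<Otimes>\<^sub>M count_space UNIV). P z}"
    by (simp add: space_pair_measure)
  then show ?thesis
    unfolding joint_distr_def
    by (subst measure_distr) (auto intro: arg_cong[where f="measure M"])
qed

lemma risk_joint_distr:
  fixes X :: "'w \<Rightarrow> 'a::euclidean_space" and L :: "'w \<Rightarrow> int"
  assumes [measurable]: "X \<in> measurable M borel" "L \<in> measurable M (count_space UNIV)"
    "f \<in> measurable borel (count_space UNIV)"
  shows "risk (joint_distr M X L) f = measure M {\<omega>\<in>space M. f (X \<omega>) \<noteq> L \<omega>}"
  unfolding risk_def space_joint_distr by (subst measure_joint_distr) auto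

lemma peer_risk_joint_distr:
  fixes X :: "'w \<Rightarrow> 'a::euclidean_space" and L :: "'w \<Rightarrow> int"
  assumes "prob_space M"
    and [measurable]: "X \<in> measurable M borel" "L \<in> measurable M (count_space UNIV)"
      "f \<in> measurable borel (count_space UNIV)"
    and f_vals: "\<forall>x. f x \<in> {-1, 1}"
  shows "peer_risk (joint_distr M X L) f = measure M {\<omega>\<in>space M. f (X \<omega>) \<noteq> L \<omega>}
    - (measure M {\<omega>\<in>space M. f (X \<omega>) = 1} * measure M {\<omega>\<in>space M. L \<omega> \<noteq> 1}
       + measure M {\<omega>\<in>space M. f (X \<omega>) = -1} * measure M {\<omega>\<in>space M. L \<omega> \<noteq> -1})"
proof -
  have "prob_space (joint_distr M X L)"
    unfolding joint_distr_def by (intro prob_space.prob_space_distr assms) measurable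
  moreover have "(\<lambda>z. f (fst z)) \<in> measurable (joint_distr M X L) (count_space UNIV)"
    and "snd \<in> measurable (joint_distr M X L) (count_space UNIV)"
    unfolding measurable_cong_sets[OF sets_joint_distr refl] by measurable
  moreover have "measure (joint_distr M X L) {z. f (fst z) = c}
      = measure M {\<omega>\<in>space M. f (X \<omega>) = c}"
    and "measure (joint_distr M X L) {z. snd z \<noteq> c} = measure M {\<omega>\<in>space M. L \<omega> \<noteq> c}" for c
    by (subst measure_joint_distr; simp)+
  ultimately show ?thesis
    using f_vals by (simp add: peer_risk_eq_risk_minus risk_joint_distr space_joint_distr)
qed

lemma peer_risk_joint_distr_binary_label:
  fixes X :: "'w \<Rightarrow> 'a::euclidean_space" and L :: "'w \<Rightarrow> int"
  assumes M: "prob_space M"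
    and [measurable]: "X \<in> measurable M borel" "L \<in> measurable M (count_space UNIV)"
      "f \<in> measurable borel (count_space UNIV)"
    and L_vals: "\<forall>\<omega>\<in>space M. L \<omega> \<in> {-1, 1}"
    and f_vals: "\<forall>x. f x \<in> {-1, 1}"
  shows "peer_risk (joint_distr M X L) f = risk (joint_distr M X L) f
    - measure M {\<omega>\<in>space M. L \<omega> = 1}
    + measure M {\<omega>\<in>space M. f (X \<omega>) = 1}
      * (measure M {\<omega>\<in>space M. L \<omega> = 1} - measure M {\<omega>\<in>space M. L \<omega> = -1})"
proof -
  interpret prob_space M by fact
  have label_compl: "{\<omega>\<in>space M. L \<omega> \<noteq> 1} = {\<omega>\<in>space M. L \<omega> = -1}"
    "{\<omega>\<in>space M. L \<omega> \<noteq> -1} = {\<omega>\<in>space M. L \<omega> = 1}"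
    using L_vals by auto
  have classifier_compl: "prob {\<omega>\<in>space M. f (X \<omega>) = -1} = 1 - prob {\<omega>\<in>space M. f (X \<omega>) = 1}"
  proof -
    have "{\<omega>\<in>space M. f (X \<omega>) = -1} = space M - {\<omega>\<in>space M. f (X \<omega>) = 1}"
      using f_vals by auto
    moreover have "{\<omega>\<in>space M. f (X \<omega>) = 1} \<in> events"
      by measurable
    ultimately show ?thesis
      using prob_compl by simp
  qed
  show ?thesis
    unfolding peer_risk_joint_distr[OF M assms(2-4) f_vals] risk_joint_distr[OF assms(2-4)]
      label_compl classifier_compl
    by (simp add: algebra_simps)
qed

lemma risk_le_of_peer_risk_le:
  fixes X :: "'w \<Rightarrow> 'a::euclidean_space" and L :: "'w \<Rightarrow> int"
  assumes M: "prob_space M"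
    and [measurable]: "X \<in> measurable M borel" "L \<in> measurable M (count_space UNIV)"
      "f \<in> measurable borel (count_space UNIV)" "g \<in> measurable borel (count_space UNIV)"
    and L_vals: "\<forall>\<omega>\<in>space M. L \<omega> \<in> {-1, 1}"
    and f_vals: "\<forall>x. f x \<in> {-1, 1}" and g_vals: "\<forall>x. g x \<in> {-1, 1}"
    and peer_le: "peer_risk (joint_distr M X L) f \<le> peer_risk (joint_distr M X L) g"
  shows "risk (joint_distr M X L) f \<le> risk (joint_distr M X L) g
    + \<bar>measure M {\<omega>\<in>space M. L \<omega> = 1} - measure M {\<omega>\<in>space M. L \<omega> = -1}\<bar>"
proof -
  interpret prob_space M by fact
  let ?a = "\<lambda>h. prob {\<omega>\<in>space M. h (X \<omega>) = 1}"
  let ?\<delta> = "prob {\<omega>\<in>space M. L \<omega> = 1} - prob {\<omega>\<in>space M. L \<omega> = -1}"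
  have peer: "peer_risk (joint_distr M X L) h
      = risk (joint_distr M X L) h - prob {\<omega>\<in>space M. L \<omega> = 1} + ?a h * ?\<delta>"
    if "h \<in> measurable borel (count_space UNIV)" "\<forall>x. h x \<in> {-1, 1}" for h
    using peer_risk_joint_distr_binary_label[OF M assms(2,3) that(1) L_vals that(2)] .
  have "risk (joint_distr M X L) f - risk (joint_distr M X L) g \<le> (?a g - ?a f) * ?\<delta>"
    using peer_le unfolding peer[OF assms(4) f_vals] peer[OF assms(5) g_vals] left_diff_distrib
    by linarith
  also have "\<dots> \<le> \<bar>?a g - ?a f\<bar> * \<bar>?\<delta>\<bar>"
    unfolding abs_mult[symmetric] by (rule abs_ge_self)
  also have "\<dots> \<le> \<bar>?\<delta>\<bar>"
  proof (rule mult_left_le_one_le)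
    have "0 \<le> ?a h \<and> ?a h \<le> 1" for h
      by simp
    from this[of f] this[of g] show "\<bar>?a g - ?a f\<bar> \<le> 1"
      unfolding abs_le_iff by linarith
  qed simp_all
  finally show ?thesis
    by simp
qed

text \<open>Writing \<open>b\<^sub>s\<^sub>y\<close> for \<open>P(f(X) = s, Y = y)\<close> (\<open>m\<close> standing for \<open>-1\<close>), the left-hand side is the
  noisy peer risk and the right-hand side the clean one.\<close>

lemma peer_loss_noise_identity:
  fixes b11 b1m bm1 bmm e_pos e_neg :: real
  assumes "b11 + b1m + bm1 + bmm = 1"
  shows "b11 * e_pos + b1m * (1 - e_neg) + bm1 * (1 - e_pos) + bmm * e_neg
      - ((b11 + b1m) * ((b11 + bm1) * e_pos + (b1m + bmm) * (1 - e_neg))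
         + (bm1 + bmm) * ((b11 + bm1) * (1 - e_pos) + (b1m + bmm) * e_neg))
    = (1 - e_pos - e_neg) * (b1m + bm1 - ((b11 + b1m) * (b1m + bmm) + (bm1 + bmm) * (b11 + bm1)))"
  using assms by algebra

locale noisy_labels = prob_space M for M :: "'w measure" +
  fixes X :: "'w \<Rightarrow> 'a::euclidean_space" and Y Yt :: "'w \<Rightarrow> int"
  assumes X_meas [measurable]: "X \<in> measurable M borel"
    and Y_meas [measurable]: "Y \<in> measurable M (count_space UNIV)"
    and Yt_meas [measurable]: "Yt \<in> measurable M (count_space UNIV)"
    and Y_vals: "\<forall>\<omega>\<in>space M. Y \<omega> \<in> {-1, 1}"
    and Yt_vals: "\<forall>\<omega>\<in>space M. Yt \<omega> \<in> {-1, 1}"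
    and p_pos: "0 < prob {\<omega>\<in>space M. Y \<omega> = 1}"
    and p_lt1: "prob {\<omega>\<in>space M. Y \<omega> = 1} < 1"
    and cond_indep: "\<forall>A\<in>sets borel. \<forall>y y'.
          prob {\<omega>\<in>space M. X \<omega> \<in> A \<and> Y \<omega> = y \<and> Yt \<omega> = y'} * prob {\<omega>\<in>space M. Y \<omega> = y}
          = prob {\<omega>\<in>space M. X \<omega> \<in> A \<and> Y \<omega> = y} * prob {\<omega>\<in>space M. Y \<omega> = y \<and> Yt \<omega> = y'}"
begin

text \<open>\<open>noise_transition y t\<close> is \<open>P(Yt = t | Y = y)\<close>; the paper's noise rates are
  \<open>e_pos = noise_transition 1 (-1)\<close> and \<open>e_neg = noise_transition (-1) 1\<close>.\<close>

definition noise_transition :: "int \<Rightarrow> int \<Rightarrow> real" where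
  "noise_transition y t = prob {\<omega>\<in>space M. Y \<omega> = y \<and> Yt \<omega> = t} / prob {\<omega>\<in>space M. Y \<omega> = y}"

lemma prob_Y_minus_one: "prob {\<omega>\<in>space M. Y \<omega> = -1} = 1 - prob {\<omega>\<in>space M. Y \<omega> = 1}"
proof -
  have "{\<omega>\<in>space M. Y \<omega> = -1} = space M - {\<omega>\<in>space M. Y \<omega> = 1}"
    using Y_vals by auto
  then show ?thesis
    by (simp add: prob_compl)
qed

lemma prob_Y_pos: "y \<in> {-1, 1} \<Longrightarrow> 0 < prob {\<omega>\<in>space M. Y \<omega> = y}"
  using p_pos p_lt1 prob_Y_minus_one by auto

lemma noise_transition_sum:
  assumes "y \<in> {-1, 1}"
  shows "noise_transition y 1 + noise_transition y (-1) = 1"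
proof -
  let ?E = "\<lambda>t. {\<omega>\<in>space M. Y \<omega> = y \<and> Yt \<omega> = t}"
  have events: "?E t \<in> events" for t
    by measurable
  have "{\<omega>\<in>space M. Y \<omega> = y} = ?E 1 \<union> ?E (-1)"
    using Yt_vals by auto
  moreover have "?E 1 \<inter> ?E (-1) = {}"
    by auto
  ultimately have "prob {\<omega>\<in>space M. Y \<omega> = y} = prob (?E 1) + prob (?E (-1))"
    using finite_measure_Union[OF events events] by simp
  then show ?thesis
    using prob_Y_pos[OF assms] unfolding noise_transition_def
    by (simp add: add_divide_distrib[symmetric])
qed

lemma prob_noisy_atom_factor:
  fixes f :: "'a \<Rightarrow> int"
  assumes "f \<in> measurable borel (count_space UNIV)" and "y \<in> {-1, 1}"
  shows "prob {\<omega>\<in>space M. f (X \<omega>) = s \<and> Y \<omega> = y \<and> Yt \<omega> = t}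
    = prob {\<omega>\<in>space M. f (X \<omega>) = s \<and> Y \<omega> = y} * noise_transition y t"
proof -
  have "f -` {s} \<in> sets borel"
    using measurable_sets[OF assms(1), of "{s}"] by simp
  then show ?thesis
    using cond_indep prob_Y_pos[OF assms(2)] by (auto simp: noise_transition_def field_simps)
qed

lemma prob_eq_sum_atoms:
  fixes f :: "'a \<Rightarrow> int"
  assumes f_meas [measurable]: "f \<in> measurable borel (count_space UNIV)"
    and f_vals: "\<forall>x. f x \<in> {-1, 1}"
  shows "prob {\<omega>\<in>space M. Q (f (X \<omega>)) (Y \<omega>) (Yt \<omega>)}
    = (\<Sum>s\<in>{-1,1}. \<Sum>y\<in>{-1,1}. \<Sum>t\<in>{-1,1::int}.
        if Q s y t then prob {\<omega>\<in>space M. f (X \<omega>) = s \<and> Y \<omega> = y} * noise_transition y t else 0)"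
proof -
  have "{\<omega>\<in>space M. f (X \<omega>) = s \<and> Y \<omega> = y \<and> Yt \<omega> = t} \<in> events" for s y t
    by measurable
  then show ?thesis
    using f_vals Y_vals Yt_vals
    by (subst measure_eq_sum_sign_atoms[of "\<lambda>\<omega>. f (X \<omega>)"]) (simp_all add: prob_noisy_atom_factor)
qed

lemma peer_risk_noisy_eq_scaled:
  assumes f_meas [measurable]: "f \<in> measurable borel (count_space UNIV)"
    and f_vals: "\<forall>x. f x \<in> {-1, 1}"
  shows "peer_risk (joint_distr M X Yt) f
    = (1 - noise_transition 1 (-1) - noise_transition (-1) 1) * peer_risk (joint_distr M X Y) f"
proof -
  define b where "b s y = prob {\<omega>\<in>space M. f (X \<omega>) = s \<and> Y \<omega> = y}" for s y
  let ?T = noise_transition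
  have atoms: "prob {\<omega>\<in>space M. Q (f (X \<omega>)) (Y \<omega>) (Yt \<omega>)}
      = (\<Sum>s\<in>{-1,1}. \<Sum>y\<in>{-1,1}. \<Sum>t\<in>{-1,1::int}. if Q s y t then b s y * ?T y t else 0)" for Q
    unfolding b_def by (rule prob_eq_sum_atoms[OF f_meas f_vals])
  have transition_diag: "?T 1 1 = 1 - ?T 1 (-1)" "?T (-1) (-1) = 1 - ?T (-1) 1"
    using noise_transition_sum[of 1] noise_transition_sum[of "-1"] by simp_all
  have total: "b 1 1 + b 1 (-1) + b (-1) 1 + b (-1) (-1) = 1"
    using atoms[of "\<lambda>_ _ _. True"] by (simp add: prob_space transition_diag algebra_simps)
  define e_pos e_neg where "e_pos = ?T 1 (-1)" and "e_neg = ?T (-1) 1"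
  have noisy_terms: "prob {\<omega>\<in>space M. f (X \<omega>) \<noteq> Yt \<omega>}
      = b 1 1 * e_pos + b 1 (-1) * (1 - e_neg) + b (-1) 1 * (1 - e_pos) + b (-1) (-1) * e_neg"
    "prob {\<omega>\<in>space M. Yt \<omega> \<noteq> 1}
      = (b 1 1 + b (-1) 1) * e_pos + (b 1 (-1) + b (-1) (-1)) * (1 - e_neg)"
    "prob {\<omega>\<in>space M. Yt \<omega> \<noteq> -1}
      = (b 1 1 + b (-1) 1) * (1 - e_pos) + (b 1 (-1) + b (-1) (-1)) * e_neg"
    using atoms[of "\<lambda>s y t. s \<noteq> t"] atoms[of "\<lambda>s y t. t \<noteq> 1"] atoms[of "\<lambda>s y t. t \<noteq> -1"]
    by (simp_all add: transition_diag e_pos_def e_neg_def algebra_simps)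
  have clean_terms: "prob {\<omega>\<in>space M. f (X \<omega>) \<noteq> Y \<omega>} = b 1 (-1) + b (-1) 1"
    "prob {\<omega>\<in>space M. Y \<omega> \<noteq> 1} = b 1 (-1) + b (-1) (-1)"
    "prob {\<omega>\<in>space M. Y \<omega> \<noteq> -1} = b 1 1 + b (-1) 1"
    "prob {\<omega>\<in>space M. f (X \<omega>) = 1} = b 1 1 + b 1 (-1)"
    "prob {\<omega>\<in>space M. f (X \<omega>) = -1} = b (-1) 1 + b (-1) (-1)"
    using atoms[of "\<lambda>s y t. s \<noteq> y"] atoms[of "\<lambda>s y t. y \<noteq> 1"] atoms[of "\<lambda>s y t. y \<noteq> -1"]
      atoms[of "\<lambda>s y t. s = 1"] atoms[of "\<lambda>s y t. s = -1"]
    by (simp_all add: transition_diag algebra_simps)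
  show ?thesis
    unfolding peer_risk_joint_distr[OF prob_space_axioms X_meas Yt_meas f_meas f_vals]
      peer_risk_joint_distr[OF prob_space_axioms X_meas Y_meas f_meas f_vals]
      noisy_terms clean_terms e_pos_def[symmetric] e_neg_def[symmetric]
    by (rule peer_loss_noise_identity[OF total])
qed

end

theorem theorem3:
  fixes M :: "'w measure"
    and X :: "'w \<Rightarrow> 'a::euclidean_space"
    and Y Yt :: "'w \<Rightarrow> int"
    and e_pos e_neg :: real
    and F :: "('a \<Rightarrow> int) set"
    and fstar :: "'a \<Rightarrow> int"
  assumes M: "prob_space M"
    and X_meas: "X \<in> measurable M borel"
    and Y_meas: "Y \<in> measurable M (count_space UNIV)"
    and Yt_meas: "Yt \<in> measurable M (count_space UNIV)"
    and Y_vals: "\<forall>\<omega>\<in>space M. Y \<omega> \<in> {-1, 1}"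
    and Yt_vals: "\<forall>\<omega>\<in>space M. Yt \<omega> \<in> {-1, 1}"
    and p_pos: "0 < measure M {\<omega>\<in>space M. Y \<omega> = 1}"
    and p_lt1: "measure M {\<omega>\<in>space M. Y \<omega> = 1} < 1"
    and e_pos_def: "e_pos = measure M {\<omega>\<in>space M. Y \<omega> = 1 \<and> Yt \<omega> = -1}
                            / measure M {\<omega>\<in>space M. Y \<omega> = 1}"
    and e_neg_def: "e_neg = measure M {\<omega>\<in>space M. Y \<omega> = -1 \<and> Yt \<omega> = 1}
                            / measure M {\<omega>\<in>space M. Y \<omega> = -1}"
    and cond_indep: "\<forall>A\<in>sets borel. \<forall>y y'.
          measure M {\<omega>\<in>space M. X \<omega> \<in> A \<and> Y \<omega> = y \<and> Yt \<omega> = y'}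
            * measure M {\<omega>\<in>space M. Y \<omega> = y}
          = measure M {\<omega>\<in>space M. X \<omega> \<in> A \<and> Y \<omega> = y}
            * measure M {\<omega>\<in>space M. Y \<omega> = y \<and> Yt \<omega> = y'}"
    and p_ne_half: "measure M {\<omega>\<in>space M. Y \<omega> = 1} \<noteq> 1/2"
    and noise: "e_neg + e_pos < 1"
    and F_cls: "\<forall>f\<in>F. f \<in> measurable borel (count_space UNIV) \<and> (\<forall>x. f x \<in> {-1, 1})"
    and min_attained: "\<exists>g\<in>F. \<forall>f\<in>F. risk (joint_distr M X Y) g \<le> risk (joint_distr M X Y) f"
    and fstar_in: "fstar \<in> F"
    and fstar_min: "\<forall>f\<in>F. peer_risk (joint_distr M X Yt) fstar \<le> peer_risk (joint_distr M X Yt) f"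
  shows "\<bar>risk (joint_distr M X Y) fstar - (INF f\<in>F. risk (joint_distr M X Y) f)\<bar>
           \<le> \<bar>measure M {\<omega>\<in>space M. Y \<omega> = 1} - measure M {\<omega>\<in>space M. Y \<omega> = -1}\<bar>"
proof -
  interpret noisy_labels M X Y Yt
    using M X_meas Y_meas Yt_meas Y_vals Yt_vals p_pos p_lt1 cond_indep
    by (simp add: noisy_labels_def noisy_labels_axioms_def)
  let ?R = "risk (joint_distr M X Y)" and ?P = "peer_risk (joint_distr M X Y)"
  have F_meas: "f \<in> measurable borel (count_space UNIV)" and F_vals: "\<forall>x. f x \<in> {-1, 1}"
    if "f \<in> F" for f
    using F_cls that by auto
  have peer_noisy: "peer_risk (joint_distr M X Yt) f = (1 - e_pos - e_neg) * ?P f" if "f \<in> F" for f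
    using peer_risk_noisy_eq_scaled[OF F_meas[OF that] F_vals[OF that]]
    by (simp add: e_pos_def e_neg_def noise_transition_def)
  obtain g where g: "g \<in> F" "\<forall>f\<in>F. ?R g \<le> ?R f"
    using min_attained by blast
  have "(INF f\<in>F. ?R f) = ?R g"
    by (rule cInf_eq_minimum) (use g in auto)
  moreover have "?R g \<le> ?R fstar"
    using g fstar_in by blast
  moreover have "?P fstar \<le> ?P g"
    using fstar_min[rule_format, OF g(1)] noise
    unfolding peer_noisy[OF fstar_in] peer_noisy[OF g(1)] by (simp add: mult_le_cancel_left_pos)
  then have "?R fstar \<le> ?R g + \<bar>prob {\<omega>\<in>space M. Y \<omega> = 1} - prob {\<omega>\<in>space M. Y \<omega> = -1}\<bar>"
    by (rule risk_le_of_peer_risk_le[OF M X_meas Y_meas F_meas[OF fstar_in] F_meas[OF g(1)]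
          Y_vals F_vals[OF fstar_in] F_vals[OF g(1)]])
  ultimately show ?thesis
    by simp
qed

end
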